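(* Let $d\geq 2$ and let $\omega_{2d}=\{\mathbf x_1,\ldots,\mathbf x_{2d}\}$ be an antipodal configuration of $2d$ points on the unit sphere $S^{d-1}\subset\mathbb R^d$. Then $$\eta(\omega_{2d},S^{d-1}):=\min_{\mathbf x\in S^{d-1}}\max_{1\le i\le 2d}\mathbf x\cdot\mathbf x_i\leq \frac{1}{\sqrt d}.$$ Equality holds if and only if $\omega_{2d}$ is the set of vertices of a regular cross-polytope inscribed in $S^{d-1}$, i.e. $\omega_{2d}=\{\pm\mathbf a_1,\ldots,\pm\mathbf a_d\}$ for some orthonormal basis $\{\mathbf a_1,\ldots,\mathbf a_d\}$ of $\mathbb R^d$.
   Context: $S^{d-1}=\{\mathbf x\in\mathbb R^d:|\mathbf x|=1\}$. A configuration is a list of points (points may coincide). A configuration on $S^{d-1}$ is antipodal if together with a point $\mathbf x$ it contains $-\mathbf x$. *)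

theory Defs
  imports "HOL-Analysis.Analysis"
begin

text \<open>A configuration is a list of points (points may coincide).
  It lies on the unit sphere if all its points have norm 1; it is antipodal
  if together with a point x it contains -x.\<close>

definition on_sphere :: "('a::real_normed_vector) list \<Rightarrow> bool" where
  "on_sphere xs \<longleftrightarrow> (\<forall>x\<in>set xs. norm x = 1)"

definition antipodal :: "('a::real_normed_vector) list \<Rightarrow> bool" where
  "antipodal xs \<longleftrightarrow> (\<forall>x\<in>set xs. - x \<in> set xs)"

text \<open>Covering radius type quantity
  eta(omega, S) = min over x in S of max over i of x . x_i
  (the minimum exists by compactness; we use the infimum).\<close>

definition eta :: "('a::real_inner) list \<Rightarrow> 'a set \<Rightarrow> real" where
  "eta xs S = (INF x\<in>S. Max ((\<lambda>y. x \<bullet> y) ` set xs))"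

definition orthonormal_basis :: "('n::finite \<Rightarrow> real^'n) \<Rightarrow> bool" where
  "orthonormal_basis a \<longleftrightarrow> (\<forall>i j. a i \<bullet> a j = (if i = j then 1 else 0))"

end

theory Submission
  imports Defs
begin

text \<open>Write the antipodal configuration as \<open>Y \<union> -Y\<close> with \<open>|Y| \<le> d\<close>; then \<open>\<eta>\<close> is the infimum
  over unit vectors \<open>x\<close> of \<open>max {|x \<bullet> y| | y \<in> Y}\<close>. If \<open>Y\<close> does not span \<open>\<real>\<^sup>d\<close>, a unit vector
  orthogonal to \<open>Y\<close> gives the value 0. Otherwise \<open>Y\<close> is a basis with dual basis \<open>b\<^sub>y\<close>, and
  \<open>|b\<^sub>y| \<ge> 1\<close> since \<open>b\<^sub>y \<bullet> y = 1\<close>. Choosing the signs one at a time, \<open>w = \<Sum> \<plusminus>b\<^sub>y\<close> satisfies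
  \<open>|w|\<^sup>2 \<ge> \<Sum> |b\<^sub>y|\<^sup>2 \<ge> d\<close> while \<open>w \<bullet> y = \<plusminus>1\<close>, so \<open>x = w / |w|\<close> has \<open>|x \<bullet> y| \<le> 1/\<surd>d\<close>.
  Equality forces \<open>|b\<^sub>y| = 1\<close>, hence \<open>b\<^sub>y = y\<close>, i.e. \<open>Y\<close> is orthonormal. Conversely, for an
  orthonormal basis Parseval's identity \<open>\<Sum> (x \<bullet> a\<^sub>i)\<^sup>2 = 1\<close> yields some \<open>|x \<bullet> a\<^sub>i| \<ge> 1/\<surd>d\<close>.\<close>

lemma antipodal_set_split:
  fixes S :: "'a::real_vector set"
  assumes "finite S" "0 \<notin> S" "\<forall>s\<in>S. - s \<in> S"
  obtains Y where "S = Y \<union> uminus ` Y" "Y \<inter> uminus ` Y = {}"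
  using assms
proof (induction S arbitrary: thesis rule: finite_psubset_induct)
  case (psubset S)
  show ?case
  proof (cases "S = {}")
    case True
    then show ?thesis using psubset.prems(1)[of "{}"] by simp
  next
    case False
    then obtain s where s: "s \<in> S" by blast
    have "s \<noteq> - s"
    proof
      assume "s = - s"
      then have "(2::real) *\<^sub>R s = 0" by (metis scaleR_2 add.right_inverse)
      then show False using s psubset.prems(2) by auto
    qed
    define S' where "S' = S - {s, - s}"
    have "S' \<subset> S" using s unfolding S'_def by blast
    moreover have "0 \<notin> S'" "\<forall>s\<in>S'. - s \<in> S'"
      using psubset.prems(2,3) unfolding S'_def by (auto simp: minus_equation_iff)
    ultimately obtain Y where Y: "S' = Y \<union> uminus ` Y" "Y \<inter> uminus ` Y = {}"
      using psubset.IH by blast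
    show ?thesis
    proof (rule psubset.prems(1))
      show "S = insert s Y \<union> uminus ` insert s Y"
        using Y(1) s psubset.prems(3) unfolding S'_def by auto
      show "insert s Y \<inter> uminus ` insert s Y = {}"
        using Y \<open>s \<noteq> - s\<close> unfolding S'_def by (auto simp: minus_equation_iff)
    qed
  qed
qed

lemma card_antipodal_split:
  fixes Y :: "'a::group_add set"
  assumes "finite Y" "Y \<inter> uminus ` Y = {}"
  shows "card (Y \<union> uminus ` Y) = 2 * card Y"
  using card_Un_disjoint[OF assms(1) _ assms(2)] assms(1) by (simp add: card_image)

lemma antipodal_configuration_split:
  fixes xs :: "'a::real_normed_vector list"
  assumes "on_sphere xs" "antipodal xs"
  obtains Y where "set xs = Y \<union> uminus ` Y" "finite Y" "2 * card Y \<le> length xs"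
    "\<forall>y\<in>Y. norm y = 1"
proof -
  have unit: "\<forall>s\<in>set xs. norm s = 1" using assms(1) by (simp add: on_sphere_def)
  then obtain Y where xs_Y: "set xs = Y \<union> uminus ` Y" and disj: "Y \<inter> uminus ` Y = {}"
    using antipodal_set_split[of "set xs"] assms(2) by (force simp: antipodal_def)
  moreover have "finite Y" using xs_Y by (metis List.finite_set finite_Un)
  moreover have "2 * card Y \<le> length xs"
    using card_antipodal_split[OF \<open>finite Y\<close> disj] card_length[of xs] xs_Y by simp
  ultimately show ?thesis using that unit by blast
qed

lemma eta_antipodal:
  fixes xs :: "'a::real_inner list"
  assumes "set xs = Y \<union> uminus ` Y"
  shows "eta xs S = (INF x\<in>S. Max ((\<lambda>y. \<bar>x \<bullet> y\<bar>) ` Y))"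
proof -
  have "finite Y" using assms by (metis List.finite_set finite_Un)
  have "Max ((\<lambda>s. x \<bullet> s) ` set xs) = Max ((\<lambda>y. \<bar>x \<bullet> y\<bar>) ` Y)" for x
  proof (cases "Y = {}")
    case False
    have fin: "finite ((\<lambda>s. x \<bullet> s) ` set xs)" "finite ((\<lambda>y. \<bar>x \<bullet> y\<bar>) ` Y)"
      using \<open>finite Y\<close> by auto
    have "x \<bullet> s \<le> Max ((\<lambda>y. \<bar>x \<bullet> y\<bar>) ` Y)" if "s \<in> set xs" for s
    proof -
      obtain y where "y \<in> Y" "x \<bullet> s \<le> \<bar>x \<bullet> y\<bar>" using \<open>s \<in> set xs\<close> assms by auto
      then show ?thesis using fin(2) by (meson Max_ge image_eqI order_trans)
    qed
    moreover have "\<bar>x \<bullet> y\<bar> \<le> Max ((\<lambda>s. x \<bullet> s) ` set xs)" if "y \<in> Y" for y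
    proof -
      have "x \<bullet> y \<in> (\<lambda>s. x \<bullet> s) ` set xs" "x \<bullet> - y \<in> (\<lambda>s. x \<bullet> s) ` set xs"
        using that assms by (auto simp del: inner_minus_right)
      then have "x \<bullet> y \<le> Max ((\<lambda>s. x \<bullet> s) ` set xs)" "x \<bullet> - y \<le> Max ((\<lambda>s. x \<bullet> s) ` set xs)"
        using fin(1) by (meson Max_ge)+
      then show ?thesis by (simp add: abs_if)
    qed
    ultimately show ?thesis
      using False assms fin by (intro antisym) (simp_all add: Max_le_iff)
  qed (use assms in simp)
  then show ?thesis unfolding eta_def by simp
qed

lemma eta_antipodal_le:
  fixes xs :: "'a::real_inner list"
  assumes "set xs = Y \<union> uminus ` Y" "Y \<noteq> {}" "x \<in> S"
  shows "eta xs S \<le> Max ((\<lambda>y. \<bar>x \<bullet> y\<bar>) ` Y)"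
proof -
  have "finite Y" using assms by (metis List.finite_set finite_Un)
  then have "bdd_below ((\<lambda>x. Max ((\<lambda>y. \<bar>x \<bullet> y\<bar>) ` Y)) ` S)"
    using assms(2) by (intro bdd_belowI2[of _ 0]) (auto simp: Max_ge_iff)
  then show ?thesis unfolding eta_antipodal[OF assms(1)] using assms(3) by (rule cINF_lower)
qed

lemma eta_antipodal_ge:
  fixes xs :: "'a::real_inner list"
  assumes "set xs = Y \<union> uminus ` Y" "S \<noteq> {}" "\<forall>x\<in>S. \<exists>y\<in>Y. c \<le> \<bar>x \<bullet> y\<bar>"
  shows "c \<le> eta xs S"
proof -
  have "finite Y" using assms by (metis List.finite_set finite_Un)
  moreover have "Y \<noteq> {}" using assms(2,3) by blast
  ultimately show ?thesis
    unfolding eta_antipodal[OF assms(1)] using assms(2,3)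
    by (intro cINF_greatest) (auto simp: Max_ge_iff)
qed

lemma exists_signs_norm_sum_ge:
  fixes b :: "'i \<Rightarrow> 'a::real_inner"
  assumes "finite I"
  shows "\<exists>e. (\<forall>i\<in>I. \<bar>e i\<bar> = 1) \<and> (\<Sum>i\<in>I. (norm (b i))\<^sup>2) \<le> (norm (\<Sum>i\<in>I. e i *\<^sub>R b i))\<^sup>2"
  using assms
proof (induction I rule: finite_induct)
  case empty
  then show ?case by auto
next
  case (insert j I)
  then obtain e where e: "\<forall>i\<in>I. \<bar>e i\<bar> = 1"
    "(\<Sum>i\<in>I. (norm (b i))\<^sup>2) \<le> (norm (\<Sum>i\<in>I. e i *\<^sub>R b i))\<^sup>2" by blast
  define v where "v = (\<Sum>i\<in>I. e i *\<^sub>R b i)"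
  define s :: real where "s = (if v \<bullet> b j \<ge> 0 then 1 else -1)"
  define e' where "e' = e(j := s)"
  have "(\<Sum>i\<in>I. e' i *\<^sub>R b i) = v"
    unfolding v_def e'_def using insert.hyps(2) by (intro sum.cong) auto
  then have sum_e': "(\<Sum>i\<in>insert j I. e' i *\<^sub>R b i) = s *\<^sub>R b j + v"
    using insert.hyps by (simp add: e'_def)
  have "(norm (s *\<^sub>R b j + v))\<^sup>2 = (norm (b j))\<^sup>2 + (norm v)\<^sup>2 + 2 * (s * (v \<bullet> b j))"
    unfolding power2_norm_eq_inner
    by (simp add: inner_add_left inner_add_right inner_commute s_def algebra_simps)
  also have "\<dots> \<ge> (norm (b j))\<^sup>2 + (\<Sum>i\<in>I. (norm (b i))\<^sup>2)"
    using e(2) unfolding v_def[symmetric] by (simp add: s_def)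
  finally have "(\<Sum>i\<in>insert j I. (norm (b i))\<^sup>2) \<le> (norm (\<Sum>i\<in>insert j I. e' i *\<^sub>R b i))\<^sup>2"
    using insert.hyps by (simp add: sum_e')
  moreover have "\<forall>i\<in>insert j I. \<bar>e' i\<bar> = 1" using e(1) by (simp add: e'_def s_def)
  ultimately show ?case by blast
qed

lemma dual_system_exists:
  fixes Y :: "'a::euclidean_space set"
  assumes "independent Y"
  shows "\<exists>b. \<forall>y\<in>Y. \<forall>y'\<in>Y. b y \<bullet> y' = (if y' = y then 1 else 0)"
proof -
  have "\<exists>b. b \<bullet> y = 1 \<and> (\<forall>y'\<in>Y - {y}. b \<bullet> y' = 0)" if "y \<in> Y" for y
  proof -
    obtain u z where u: "u \<in> span (Y - {y})" and z: "\<And>w. w \<in> span (Y - {y}) \<Longrightarrow> orthogonal z w"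
      and yuz: "y = u + z"
      using orthogonal_subspace_decomp_exists by blast
    have "y \<notin> span (Y - {y})" using assms that by (simp add: dependent_def)
    then have "z \<noteq> 0" using u yuz by auto
    moreover have "z \<bullet> y = z \<bullet> z" using z[OF u] yuz by (simp add: orthogonal_def inner_add_right)
    moreover have "z \<bullet> y' = 0" if "y' \<in> Y - {y}" for y'
      using z[OF span_base[OF that]] by (simp add: orthogonal_def)
    ultimately show ?thesis by (intro exI[of _ "z /\<^sub>R (z \<bullet> z)"]) auto
  qed
  then obtain b where "\<forall>y\<in>Y. b y \<bullet> y = 1 \<and> (\<forall>y'\<in>Y - {y}. b y \<bullet> y' = 0)"
    by metis
  then show ?thesis by (intro exI[of _ b]) auto
qed

lemma exists_unit_vector_inner_le_dual:
  fixes Y :: "'a::real_inner set"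
  assumes "finite Y" "Y \<noteq> {}"
    and dual: "\<forall>y\<in>Y. \<forall>y'\<in>Y. b y \<bullet> y' = (if y' = y then 1 else 0)"
  shows "\<exists>x. norm x = 1 \<and> (\<forall>y\<in>Y. \<bar>x \<bullet> y\<bar> \<le> 1 / sqrt (\<Sum>y\<in>Y. (norm (b y))\<^sup>2))"
proof -
  obtain e where e: "\<forall>y\<in>Y. \<bar>e y\<bar> = 1"
    and w_ge: "(\<Sum>y\<in>Y. (norm (b y))\<^sup>2) \<le> (norm (\<Sum>y\<in>Y. e y *\<^sub>R b y))\<^sup>2"
    using exists_signs_norm_sum_ge[OF \<open>finite Y\<close>] by blast
  define w where "w = (\<Sum>y\<in>Y. e y *\<^sub>R b y)"
  have w_inner: "w \<bullet> y = e y" if "y \<in> Y" for y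
  proof -
    have "w \<bullet> y = (\<Sum>y'\<in>Y. e y' * (b y' \<bullet> y))" unfolding w_def by (simp add: inner_sum_left)
    also have "\<dots> = (\<Sum>y'\<in>Y. if y' = y then e y' else 0)"
      using dual that by (intro sum.cong) auto
    finally show ?thesis using \<open>finite Y\<close> that by simp
  qed
  have "w \<noteq> 0" using w_inner e \<open>Y \<noteq> {}\<close> by fastforce
  obtain y0 where "y0 \<in> Y" using \<open>Y \<noteq> {}\<close> by blast
  then have "b y0 \<noteq> 0" using dual by fastforce
  then have "0 < (\<Sum>y\<in>Y. (norm (b y))\<^sup>2)"
    using \<open>finite Y\<close> \<open>y0 \<in> Y\<close> by (intro sum_pos2) auto
  moreover have "sqrt (\<Sum>y\<in>Y. (norm (b y))\<^sup>2) \<le> norm w"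
    using w_ge unfolding w_def[symmetric] by (simp add: real_le_lsqrt)
  ultimately have "1 / norm w \<le> 1 / sqrt (\<Sum>y\<in>Y. (norm (b y))\<^sup>2)"
    by (intro frac_le) auto
  moreover have "\<bar>(w /\<^sub>R norm w) \<bullet> y\<bar> = 1 / norm w" if "y \<in> Y" for y
    using w_inner[OF that] e that by (simp add: abs_mult divide_inverse_commute)
  ultimately have "\<forall>y\<in>Y. \<bar>(w /\<^sub>R norm w) \<bullet> y\<bar> \<le> 1 / sqrt (\<Sum>y\<in>Y. (norm (b y))\<^sup>2)"
    by simp
  then show ?thesis using \<open>w \<noteq> 0\<close> by (intro exI[of _ "w /\<^sub>R norm w"]) simp
qed

lemma norm_gt_one_if_inner_eq_one:
  fixes b y :: "'a::real_inner"
  assumes "norm y = 1" "b \<bullet> y = 1" "b \<noteq> y"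
  shows "1 < norm b"
proof -
  have "1 \<le> norm b" using norm_cauchy_schwarz[of b y] assms(1,2) by simp
  moreover have "norm b \<noteq> 1"
    using norm_cauchy_schwarz_eq[of b y] assms by auto
  ultimately show ?thesis by simp
qed

lemma independent_unit_vectors_inner_bound:
  fixes Y :: "'a::euclidean_space set"
  assumes "independent Y" "Y \<noteq> {}" and unit: "\<forall>y\<in>Y. norm y = 1"
  shows "\<exists>x. norm x = 1 \<and> (\<forall>y\<in>Y. \<bar>x \<bullet> y\<bar> \<le> 1 / sqrt (card Y))
           \<and> (pairwise orthogonal Y \<or> (\<forall>y\<in>Y. \<bar>x \<bullet> y\<bar> < 1 / sqrt (card Y)))"
proof -
  have "finite Y" using assms(1) by (rule independent_imp_finite)
  obtain b where dual: "\<forall>y\<in>Y. \<forall>y'\<in>Y. b y \<bullet> y' = (if y' = y then 1 else 0)"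
    using dual_system_exists[OF assms(1)] by blast
  define s where "s = (\<Sum>y\<in>Y. (norm (b y))\<^sup>2)"
  obtain x where x: "norm x = 1" "\<forall>y\<in>Y. \<bar>x \<bullet> y\<bar> \<le> 1 / sqrt s"
    using exists_unit_vector_inner_le_dual[OF \<open>finite Y\<close> assms(2) dual] unfolding s_def by blast
  have b_cases: "b y = y \<or> 1 < norm (b y)" if "y \<in> Y" for y
    using norm_gt_one_if_inner_eq_one[of y "b y"] unit dual that by auto
  have "card Y = (\<Sum>y\<in>Y. 1::real)" by simp
  also have "\<dots> \<le> s"
    unfolding s_def using b_cases by (intro sum_mono) (fastforce simp: unit)
  finally have card_le: "card Y \<le> s" .
  have card_pos: "0 < card Y" using \<open>Y \<noteq> {}\<close> \<open>finite Y\<close> by (simp add: card_gt_0_iff)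
  have "1 / sqrt s \<le> 1 / sqrt (card Y)"
    using card_le card_pos by (intro frac_le) auto
  show ?thesis
  proof (cases "\<forall>y\<in>Y. b y = y")
    case True
    then have "pairwise orthogonal Y" using dual by (auto simp: pairwise_def orthogonal_def)
    then show ?thesis using x \<open>1 / sqrt s \<le> 1 / sqrt (card Y)\<close>
      by (intro exI[of _ x]) (auto intro: order_trans)
  next
    case False
    have "card Y < s"
    proof -
      have "(\<Sum>y\<in>Y. 1::real) < s"
        unfolding s_def using b_cases False \<open>finite Y\<close>
        by (intro sum_strict_mono_ex1) (fastforce simp: unit)+
      then show ?thesis by simp
    qed
    then have "1 / sqrt s < 1 / sqrt (card Y)"
      using card_pos by (simp add: divide_strict_left_mono)
    then show ?thesis using x by (intro exI[of _ x]) fastforce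
  qed
qed

lemma exists_unit_orthogonal_if_not_spanning:
  fixes Y :: "'a::euclidean_space set"
  assumes "span Y \<noteq> UNIV"
  shows "\<exists>x. norm x = 1 \<and> (\<forall>y\<in>Y. x \<bullet> y = 0)"
proof -
  have "dim Y < DIM('a)"
    using assms dim_eq_full[of Y] dim_subset_UNIV[of Y] by simp
  then obtain z where "z \<noteq> 0" and z: "\<And>y. y \<in> span Y \<Longrightarrow> orthogonal z y"
    by (rule orthogonal_to_subspace_exists) blast
  then show ?thesis
    by (intro exI[of _ "z /\<^sub>R norm z"]) (auto simp: orthogonal_def span_base)
qed

lemma unit_vectors_inner_bound:
  fixes Y :: "'a::euclidean_space set"
  assumes "finite Y" "card Y \<le> DIM('a)" and unit: "\<forall>y\<in>Y. norm y = 1"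
  shows "\<exists>x. norm x = 1 \<and> (\<forall>y\<in>Y. \<bar>x \<bullet> y\<bar> \<le> 1 / sqrt DIM('a))
           \<and> (pairwise orthogonal Y \<and> card Y = DIM('a) \<or> (\<forall>y\<in>Y. \<bar>x \<bullet> y\<bar> < 1 / sqrt DIM('a)))"
proof (cases "span Y = UNIV")
  case True
  then have "DIM('a) \<le> card Y" using dim_le_card[of UNIV Y] \<open>finite Y\<close> by simp
  then have "card Y = DIM('a)" using assms(2) by simp
  moreover have "independent Y"
    using True \<open>finite Y\<close> assms(2) by (intro card_le_dim_spanning[of Y UNIV]) auto
  moreover have "Y \<noteq> {}" using \<open>card Y = DIM('a)\<close> by auto
  ultimately show ?thesis using independent_unit_vectors_inner_bound[OF _ _ unit] by simp
next
  case False
  then show ?thesis using exists_unit_orthogonal_if_not_spanning by fastforce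
qed

lemma orthonormal_set_exists_inner_ge:
  fixes B :: "'a::real_inner set"
  assumes "finite B" "B \<noteq> {}" "pairwise orthogonal B" "\<forall>i\<in>B. norm i = 1"
    and "x \<in> span B" "norm x = 1"
  shows "\<exists>i\<in>B. 1 / sqrt (card B) \<le> \<bar>x \<bullet> i\<bar>"
proof (rule ccontr)
  assume none: "\<not> ?thesis"
  have small: "(x \<bullet> i)\<^sup>2 < 1 / card B" if "i \<in> B" for i
  proof -
    have "\<bar>x \<bullet> i\<bar> < 1 / sqrt (card B)" using none that by (simp add: not_le)
    then have "\<bar>x \<bullet> i\<bar>\<^sup>2 < (1 / sqrt (card B))\<^sup>2" by (intro power_strict_mono) auto
    then show ?thesis by (simp add: power_divide)
  qed
  have "1 = x \<bullet> x" using \<open>norm x = 1\<close> by (simp add: norm_eq_1)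
  also have "\<dots> = x \<bullet> (\<Sum>i\<in>B. (x \<bullet> i) *\<^sub>R i)"
    using orthonormal_basis_expand[of B x] assms by simp
  also have "\<dots> = (\<Sum>i\<in>B. (x \<bullet> i)\<^sup>2)" by (simp add: inner_sum_right power2_eq_square)
  also have "\<dots> < (\<Sum>i\<in>B. 1 / card B)"
    using small assms(1,2) by (intro sum_strict_mono) auto
  also have "\<dots> = 1" using assms(1,2) by simp
  finally show False by simp
qed

lemma orthonormal_set_span_eq_UNIV:
  fixes B :: "'a::euclidean_space set"
  assumes "pairwise orthogonal B" "\<forall>i\<in>B. norm i = 1" "card B = DIM('a)"
  shows "span B = UNIV"
proof -
  have "independent B"
    using assms(1,2) by (intro pairwise_orthogonal_independent) auto
  then show ?thesis
    using card_eq_dim[of B UNIV] assms(3) independent_imp_finite by auto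
qed

lemma ex_orthonormal_basis_range_iff:
  fixes Y :: "(real^'n) set"
  shows "(\<exists>a. orthonormal_basis a \<and> range a = Y) \<longleftrightarrow>
           card Y = CARD('n) \<and> pairwise orthogonal Y \<and> (\<forall>y\<in>Y. norm y = 1)"
proof
  assume "\<exists>a. orthonormal_basis a \<and> range a = Y"
  then obtain a where "orthonormal_basis a" and Y: "Y = range a" by blast
  then have a: "\<And>i j. a i \<bullet> a j = (if i = j then 1 else 0)"
    unfolding orthonormal_basis_def by blast
  have "inj a" by (rule injI) (metis a zero_neq_one)
  then show "card Y = CARD('n) \<and> pairwise orthogonal Y \<and> (\<forall>y\<in>Y. norm y = 1)"
    using a by (auto simp: Y card_image pairwise_def orthogonal_def norm_eq_1)
next
  assume Y: "card Y = CARD('n) \<and> pairwise orthogonal Y \<and> (\<forall>y\<in>Y. norm y = 1)"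
  then have "finite Y" by (simp add: card_ge_0_finite)
  then obtain h where h: "bij_betw h (UNIV :: 'n set) Y"
    using Y finite_same_card_bij[of "UNIV :: 'n set" Y] by auto
  then have "orthonormal_basis h"
    using Y unfolding orthonormal_basis_def
    by (auto simp: bij_betw_def inj_eq pairwise_def orthogonal_def norm_eq_1)
  then show "\<exists>a. orthonormal_basis a \<and> range a = Y"
    using h by (auto simp: bij_betw_def)
qed

lemma eta_cross_polytope_ge:
  fixes xs :: "(real^'n) list"
  assumes "orthonormal_basis a" and xs_a: "set xs = range a \<union> uminus ` range a"
  shows "1 / sqrt CARD('n) \<le> eta xs (sphere 0 1)"
proof (rule eta_antipodal_ge[OF xs_a])
  have "card (range a) = CARD('n)" and orth: "pairwise orthogonal (range a)"
    and unit: "\<forall>i\<in>range a. norm i = 1"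
    using assms(1) ex_orthonormal_basis_range_iff by blast+
  moreover have "span (range a) = UNIV"
    using orthonormal_set_span_eq_UNIV[OF orth unit] \<open>card (range a) = CARD('n)\<close> by simp
  ultimately show "\<forall>x\<in>sphere 0 1. \<exists>i\<in>range a. 1 / sqrt CARD('n) \<le> \<bar>x \<bullet> i\<bar>"
    using orthonormal_set_exists_inner_ge[of "range a"] by auto
qed simp

theorem theorem2p2:
  fixes xs :: "(real^'n) list"
  assumes "CARD('n) \<ge> 2"
    and "length xs = 2 * CARD('n)"
    and "on_sphere xs"
    and "antipodal xs"
  shows "eta xs (sphere 0 1) \<le> 1 / sqrt (real CARD('n))
         \<and> (eta xs (sphere 0 1) = 1 / sqrt (real CARD('n)) \<longleftrightarrow>
            (\<exists>a. orthonormal_basis a \<and> set xs = range a \<union> uminus ` range a))"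
proof -
  obtain Y where xs_Y: "set xs = Y \<union> uminus ` Y" and "finite Y" and unit: "\<forall>y\<in>Y. norm y = 1"
    and card_Y: "2 * card Y \<le> 2 * CARD('n)"
    using antipodal_configuration_split[OF assms(3,4)] assms(2) by metis
  have "Y \<noteq> {}" using xs_Y assms(2) by auto
  obtain x where "norm x = 1" and x_le: "\<forall>y\<in>Y. \<bar>x \<bullet> y\<bar> \<le> 1 / sqrt CARD('n)"
    and x_cases: "pairwise orthogonal Y \<and> card Y = CARD('n) \<or> (\<forall>y\<in>Y. \<bar>x \<bullet> y\<bar> < 1 / sqrt CARD('n))"
    using unit_vectors_inner_bound[OF \<open>finite Y\<close> _ unit] card_Y by auto
  have eta_le_x: "eta xs (sphere 0 1) \<le> Max ((\<lambda>y. \<bar>x \<bullet> y\<bar>) ` Y)"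
    using eta_antipodal_le[OF xs_Y \<open>Y \<noteq> {}\<close>] \<open>norm x = 1\<close> by simp
  moreover have "Max ((\<lambda>y. \<bar>x \<bullet> y\<bar>) ` Y) \<le> 1 / sqrt CARD('n)"
    using x_le \<open>finite Y\<close> \<open>Y \<noteq> {}\<close> by simp
  ultimately have upper: "eta xs (sphere 0 1) \<le> 1 / sqrt CARD('n)" by linarith
  have "\<exists>a. orthonormal_basis a \<and> set xs = range a \<union> uminus ` range a"
    if "eta xs (sphere 0 1) = 1 / sqrt CARD('n)"
  proof -
    have "1 / sqrt CARD('n) \<le> Max ((\<lambda>y. \<bar>x \<bullet> y\<bar>) ` Y)" using that eta_le_x by simp
    then have "\<not> (\<forall>y\<in>Y. \<bar>x \<bullet> y\<bar> < 1 / sqrt CARD('n))"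
      using \<open>finite Y\<close> \<open>Y \<noteq> {}\<close> by (auto simp: Max_ge_iff not_less)
    then show ?thesis using x_cases unit xs_Y ex_orthonormal_basis_range_iff[of Y] by auto
  qed
  then show ?thesis using upper eta_cross_polytope_ge by (meson antisym)
qed

end
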